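(* Let $r\geq 2$ and let $\mathcal{H}=(V,E)$ be an $r$-regular $r$-uniform hypergraph with no repeated hyperedge, $V=\{v_1,\dots,v_n\}$. Let $\mathcal{A}_{\mathcal{H}}$ be its layered e-adjacency tensor, $\Delta=\max_{1\le i\le n}\deg(v_i)$ and $\Delta^\star=\max_{1\le i\le k_{\max}-1}\deg(y_i)$ (defined in the context). Then $\mathcal{A}_{\mathcal{H}}$ has an eigenvalue $\lambda$ with $|\lambda|=\max(\Delta,\Delta^\star)$.
   Context: A hypergraph $\mathcal{H}=(V,E)$ on $V=\{v_1,\dots,v_n\}$ is a family $E$ of nonempty subsets (hyperedges) of $V$; it has no repeated hyperedge if its hyperedges are pairwise distinct; it is $r$-uniform if every hyperedge has cardinality $r$, and $r$-regular if every vertex has degree $r$ (degree $\deg(v_i)$ = number of hyperedges containing $v_i$). The range is $k_{\max}=\max\{|e|:e\in E\}$. Introduce new pairwise distinct vertices $y_1,\dots,y_{k_{\max}-1}\notin V$. The layered uniform hypergraph of $\mathcal{H}$ is the $k_{\max}$-uniform hypergraph on $V\cup\{y_1,\dots,y_{k_{\max}-1}\}$ with hyperedges $e\cup\{y_{|e|},\dots,y_{k_{\max}-1}\}$ for $e\in E$; $\deg(y_i)$ is the number of these hyperedges containing $y_i$. The layered e-adjacency tensor $\mathcal{A}_{\mathcal{H}}=(a_{i_1\dots i_{k_{\max}}})$ is the symmetric hypermatrix of order $k_{\max}$ and dimension $N=n+k_{\max}-1$ (index $i\le n$ for $v_i$, index $n+l$ for $y_l$) such that: for each $e=\{v_{i_1},\dots,v_{i_j}\}\in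 E$ with $i_1<\dots<i_j$, putting $i_l=n+l-1$ for $l\in\{j+1,\dots,k_{\max}\}$, every entry whose index tuple is a permutation of $(i_1,\dots,i_{k_{\max}})$ equals $\frac{1}{(k_{\max}-1)!}$; all other entries are $0$. Eigenvalues (in the sense of Qi): for a hypermatrix $\mathcal{A}=(a_{i_1\dots i_m})$ of order $m$ and dimension $N$, $\lambda\in\mathbb{C}$ is an eigenvalue if there exists a nonzero $x\in\mathbb{C}^N$ with $\sum_{i_2,\dots,i_m=1}^{N} a_{i i_2\dots i_m}x_{i_2}\cdots x_{i_m}=\lambda x_i^{m-1}$ for all $i$. *)

theory Defs
  imports Complex_Main
begin

text \<open>A hypergraph on V = {v_1,...,v_n} is encoded with vertex v_i represented by the
  index i-1, i.e. V = {0..<n}; E is a set of nonempty subsets of {0..<n}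
  (a set, hence automatically without repeated hyperedges).\<close>

definition hypergraph :: "nat \<Rightarrow> nat set set \<Rightarrow> bool" where
  "hypergraph n E \<longleftrightarrow> (\<forall>e\<in>E. e \<noteq> {} \<and> e \<subseteq> {0..<n})"

definition uniform :: "nat \<Rightarrow> nat set set \<Rightarrow> bool" where
  "uniform r E \<longleftrightarrow> (\<forall>e\<in>E. card e = r)"

definition vdeg :: "nat set set \<Rightarrow> nat \<Rightarrow> nat" where
  "vdeg E i = card {e\<in>E. i \<in> e}"

definition regular :: "nat \<Rightarrow> nat \<Rightarrow> nat set set \<Rightarrow> bool" where
  "regular r n E \<longleftrightarrow> (\<forall>i<n. vdeg E i = r)"

definition kmax :: "nat set set \<Rightarrow> nat" where
  "kmax E = Max (card ` E)"

text \<open>The new vertex y_l (1 \<le> l \<le> kmax-1) gets index n + l - 1.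
  Layered hyperedge: e \<union> {y_|e|, ..., y_(kmax-1)}.\<close>

definition layered_edge :: "nat \<Rightarrow> nat \<Rightarrow> nat set \<Rightarrow> nat set" where
  "layered_edge n k e = e \<union> {n + l - 1 | l. card e \<le> l \<and> l \<le> k - 1}"

definition layered_edges :: "nat \<Rightarrow> nat set set \<Rightarrow> nat set set" where
  "layered_edges n E = layered_edge n (kmax E) ` E"

text \<open>Degree of y_l in the layered uniform hypergraph (number of layered hyperedges
  containing y_l; the map e \<mapsto> layered_edge is injective, so this equals the count over E).\<close>

definition ydeg :: "nat \<Rightarrow> nat set set \<Rightarrow> nat \<Rightarrow> nat" where
  "ydeg n E l = card {e\<in>E. n + l - 1 \<in> layered_edge n (kmax E) e}"

definition Delta :: "nat \<Rightarrow> nat set set \<Rightarrow> nat" where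
  "Delta n E = Max ((vdeg E) ` {0..<n})"

definition Delta_star :: "nat \<Rightarrow> nat set set \<Rightarrow> nat" where
  "Delta_star n E = Max ((ydeg n E) ` {1..kmax E - 1})"

text \<open>Hypermatrices of order m and dimension N: functions on index lists (length m, entries
  in {0..<N}; index i stands for the (i+1)-st coordinate).\<close>

text \<open>Layered e-adjacency tensor: an entry is 1/(kmax-1)! iff its index tuple is a
  permutation of (the sorted tuple of) some layered hyperedge, i.e. its entries are distinct
  and form a layered hyperedge.\<close>

definition layered_tensor :: "nat \<Rightarrow> nat set set \<Rightarrow> nat list \<Rightarrow> real" where
  "layered_tensor n E ix =
     (if length ix = kmax E \<and> distinct ix \<and> set ix \<in> layered_edges n E
      then 1 / fact (kmax E - 1) else 0)"

text \<open>Eigenvalue in the sense of Qi.\<close>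

definition tensor_eigenvalue :: "nat \<Rightarrow> nat \<Rightarrow> (nat list \<Rightarrow> real) \<Rightarrow> complex \<Rightarrow> bool" where
  "tensor_eigenvalue m N A lam \<longleftrightarrow>
     (\<exists>x :: nat \<Rightarrow> complex. (\<exists>i<N. x i \<noteq> 0) \<and>
        (\<forall>i<N. (\<Sum>ix\<in>{ix. length ix = m - 1 \<and> set ix \<subseteq> {0..<N}}.
                   of_real (A (i # ix)) * prod_list (map x ix)) = lam * x i ^ (m - 1)))"

end

theory Submission
  imports Defs "HOL-Combinatorics.Multiset_Permutations"
begin

text \<open>For an r-uniform hypergraph the range is r, so layering adds no vertex to any hyperedge:
  the layered tensor is the ordinary e-adjacency tensor and every y_l has degree 0.
  Contracting that tensor with the indicator vector of V at vertex v_i counts the orderings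
  of the hyperedges through v_i that start with v_i; there are deg(v_i) (r-1)! of them, each
  weighted by 1/(r-1)!. Hence the indicator of V is an eigenvector of an r-regular r-uniform
  hypergraph for the eigenvalue r, which is the maximum of all degrees.\<close>

lemma hypergraph_finite:
  assumes "hypergraph n E"
  shows "finite E"
  using assms unfolding hypergraph_def
  by (intro finite_subset[of E "Pow {0..<n}"]) auto

lemma kmax_uniform:
  assumes "uniform r E" "E \<noteq> {}"
  shows "kmax E = r"
proof -
  have "card ` E = {r}" using assms unfolding uniform_def by auto
  then show ?thesis unfolding kmax_def by simp
qed

lemma layered_edge_eq_self:
  assumes "0 < card e" "k \<le> card e"
  shows "layered_edge n k e = e"
  using assms unfolding layered_edge_def by auto

lemma layered_edge_kmax_uniform:
  assumes "uniform r E" "0 < r" "e \<in> E"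
  shows "layered_edge n (kmax E) e = e"
proof -
  have "kmax E = r" "card e = r"
    using assms kmax_uniform[of r E] by (auto simp: uniform_def)
  then show ?thesis using assms(2) by (simp add: layered_edge_eq_self)
qed

lemma layered_edges_uniform:
  assumes "uniform r E" "0 < r"
  shows "layered_edges n E = E"
  using layered_edge_kmax_uniform[OF assms] unfolding layered_edges_def by simp

lemma layered_tensor_uniform:
  assumes "uniform r E" "0 < r"
  shows "layered_tensor n E ix = (if distinct ix \<and> set ix \<in> E then 1 / fact (r - 1) else 0)"
proof (cases "distinct ix \<and> set ix \<in> E")
  case True
  then have "length ix = r" "kmax E = r"
    using assms kmax_uniform[of r E] by (auto simp: uniform_def distinct_card[symmetric])
  then show ?thesis using True assms by (simp add: layered_tensor_def layered_edges_uniform)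
qed (use assms in \<open>auto simp: layered_tensor_def layered_edges_uniform\<close>)

lemma vdeg_eq_0:
  assumes "hypergraph n E" "n \<le> i"
  shows "vdeg E i = 0"
proof -
  have "i \<notin> {0..<n}"
    using assms(2) by simp
  then have none: "{e\<in>E. i \<in> e} = {}"
    using assms(1) unfolding hypergraph_def by blast
  show ?thesis unfolding vdeg_def none by simp
qed

lemma ydeg_uniform:
  assumes "uniform r E" "0 < r"
  shows "ydeg n E l = vdeg E (n + l - 1)"
  using layered_edge_kmax_uniform[OF assms] unfolding ydeg_def vdeg_def
  by (intro arg_cong[where f = card]) auto

lemma Delta_star_uniform:
  assumes "hypergraph n E" "uniform r E" "2 \<le> r" "E \<noteq> {}"
  shows "Delta_star n E = 0"
proof -
  have "ydeg n E ` {1..r - 1} = (\<lambda>_. 0) ` {1..r - 1}"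
    using assms(2,3) vdeg_eq_0[OF assms(1)] by (intro image_cong) (auto simp: ydeg_uniform)
  also have "\<dots> = {0}"
    using assms(3) by (intro image_constant[of 1]) simp
  finally have "ydeg n E ` {1..r - 1} = {0}" .
  then show ?thesis unfolding Delta_star_def kmax_uniform[OF assms(2,4)] by simp
qed

lemma Delta_regular:
  assumes "regular d n E" "0 < n"
  shows "Delta n E = d"
proof -
  have "vdeg E ` {0..<n} = (\<lambda>_. d) ` {0..<n}"
    using assms(1) unfolding regular_def by (intro image_cong) auto
  also have "\<dots> = {d}"
    using assms(2) by (intro image_constant[of 0]) simp
  finally have "vdeg E ` {0..<n} = {d}" .
  then show ?thesis unfolding Delta_def by simp
qed

lemma regular_nonempty:
  assumes "regular d n E" "0 < d" "0 < n"
  shows "E \<noteq> {}"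
proof
  assume "E = {}"
  then have "vdeg E 0 = 0" by (simp add: vdeg_def)
  with assms show False unfolding regular_def by auto
qed

lemma card_edge_orderings_from:
  assumes "finite E" "uniform r E" "0 < r"
  shows "card {ix. distinct (i # ix) \<and> set (i # ix) \<in> E} = vdeg E i * fact (r - 1)"
proof -
  define F where "F = {e\<in>E. i \<in> e}"
  have edges: "\<And>e. e \<in> E \<Longrightarrow> finite e \<and> card e = r"
    using assms(2,3) unfolding uniform_def by (auto intro: card_ge_0_finite)
  have "{ix. distinct (i # ix) \<and> set (i # ix) \<in> E} = (\<Union>e\<in>F. permutations_of_set (e - {i}))"
  proof (intro equalityI subsetI)
    fix ix assume "ix \<in> {ix. distinct (i # ix) \<and> set (i # ix) \<in> E}"
    then show "ix \<in> (\<Union>e\<in>F. permutations_of_set (e - {i}))"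
      unfolding F_def permutations_of_set_def by (intro UN_I[of "set (i # ix)"]) auto
  next
    fix ix assume "ix \<in> (\<Union>e\<in>F. permutations_of_set (e - {i}))"
    then obtain e where "e \<in> E" "i \<in> e" "set ix = e - {i}" "distinct ix"
      unfolding F_def permutations_of_set_def by auto
    then show "ix \<in> {ix. distinct (i # ix) \<and> set (i # ix) \<in> E}"
      by (simp add: insert_absorb)
  qed
  also have "card \<dots> = (\<Sum>e\<in>F. card (permutations_of_set (e - {i})))"
  proof (rule card_UN_disjoint)
    show "finite F" unfolding F_def using assms(1) by simp
    show "\<forall>e\<in>F. finite (permutations_of_set (e - {i}))"
      by (simp add: finite_permutations_of_set)
    show "\<forall>e\<in>F. \<forall>f\<in>F. e \<noteq> f \<longrightarrow> permutations_of_set (e - {i}) \<inter> permutations_of_set (f - {i}) = {}"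
      unfolding F_def permutations_of_set_def by blast
  qed
  also have "\<dots> = (\<Sum>e\<in>F. fact (r - 1))"
    using edges by (intro sum.cong) (auto simp: F_def)
  also have "\<dots> = vdeg E i * fact (r - 1)"
    by (simp add: vdeg_def F_def)
  finally show ?thesis .
qed

lemma layered_tensor_apply_indicator:
  assumes "hypergraph n E" "uniform r E" "0 < r" "n \<le> N"
  shows "(\<Sum>ix\<in>{ix. length ix = r - 1 \<and> set ix \<subseteq> {0..<N}}.
            of_real (layered_tensor n E (i # ix)) * prod_list (map (\<lambda>j. of_bool (j < n)) ix))
         = (of_nat (vdeg E i) :: complex)"
    (is "(\<Sum>ix\<in>?S. ?f ix) = _")
proof -
  define T where "T = {ix. distinct (i # ix) \<and> set (i # ix) \<in> E}"
  define c :: complex where "c = of_real (1 / fact (r - 1))"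
  have edges: "\<And>e. e \<in> E \<Longrightarrow> e \<subseteq> {0..<n} \<and> card e = r"
    using assms(1,2) unfolding hypergraph_def uniform_def by blast
  have T_sub: "T \<subseteq> ?S"
  proof
    fix ix assume "ix \<in> T"
    then have "distinct (i # ix)" "set (i # ix) \<in> E" by (auto simp: T_def)
    then show "ix \<in> ?S"
      using edges[of "set (i # ix)"] assms(4) distinct_card[of "i # ix"] by auto
  qed
  have f: "?f ix = (if ix \<in> T then c else 0)" for ix
  proof (cases "ix \<in> T")
    case True
    then have "set ix \<subseteq> {0..<n}" using edges unfolding T_def by auto
    then have "prod_list (map (\<lambda>j. of_bool (j < n)) ix) = (1 :: complex)"
      by (induction ix) auto
    then show ?thesis
      using True assms(2,3) by (simp add: layered_tensor_uniform T_def c_def)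
  next
    case False
    then show ?thesis
      using assms(2,3) by (auto simp: layered_tensor_uniform T_def)
  qed
  have "(\<Sum>ix\<in>?S. ?f ix) = (\<Sum>ix\<in>T. c)"
    unfolding f using T_sub finite_lists_length_eq[of "{0..<N}" "r - 1"]
    by (intro sum.mono_neutral_cong_right) (auto simp: conj_commute)
  also have "\<dots> = of_nat (vdeg E i * fact (r - 1)) * c"
    using card_edge_orderings_from[OF hypergraph_finite[OF assms(1)] assms(2,3)]
    by (simp add: T_def)
  also have "\<dots> = of_nat (vdeg E i)"
    by (simp add: c_def of_real_divide)
  finally show ?thesis .
qed

lemma tensor_eigenvalue_regular_uniform:
  assumes "hypergraph n E" "uniform r E" "regular d n E" "2 \<le> r" "0 < n"
  shows "tensor_eigenvalue r (n + r - 1) (layered_tensor n E) (of_nat d)"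
  unfolding tensor_eigenvalue_def
proof (intro exI[of _ "\<lambda>j. of_bool (j < n)"] conjI allI impI)
  show "\<exists>i<n + r - 1. (of_bool (i < n) :: complex) \<noteq> 0"
    using assms(4,5) by (intro exI[of _ 0]) auto
  fix i assume "i < n + r - 1"
  have "of_nat (vdeg E i) = of_nat d * (of_bool (i < n) :: complex) ^ (r - 1)"
    using assms vdeg_eq_0[OF assms(1)] unfolding regular_def by (cases "i < n") auto
  with layered_tensor_apply_indicator[OF assms(1,2), of "n + r - 1" i] assms(4)
  show "(\<Sum>ix\<in>{ix. length ix = r - 1 \<and> set ix \<subseteq> {0..<n + r - 1}}.
          of_real (layered_tensor n E (i # ix)) * prod_list (map (\<lambda>j. of_bool (j < n)) ix))
        = of_nat d * (of_bool (i < n) :: complex) ^ (r - 1)"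
    by simp
qed

theorem mainTheorem3:
  fixes n r :: nat and E :: "nat set set"
  assumes "r \<ge> 2"
    and "n \<ge> 1"
    and "hypergraph n E"
    and "uniform r E"
    and "regular r n E"
  shows "\<exists>lam. tensor_eigenvalue (kmax E) (n + kmax E - 1) (layered_tensor n E) lam
             \<and> cmod lam = real (max (Delta n E) (Delta_star n E))"
proof -
  have "E \<noteq> {}" using assms regular_nonempty by auto
  then have "kmax E = r" "Delta_star n E = 0"
    using assms kmax_uniform Delta_star_uniform by auto
  moreover have "Delta n E = r" using assms Delta_regular by auto
  moreover have "tensor_eigenvalue r (n + r - 1) (layered_tensor n E) (of_nat r)"
    using assms tensor_eigenvalue_regular_uniform by auto
  ultimately show ?thesis by (intro exI[of _ "of_nat r"]) simp
qed

end
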